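(* Let $\Gamma=(M,E)$ be a reaction network with stoichiometric matrix $\mathbb S$ and $n=\dim\ker\mathbb S^T\ge0$. Then $\Gamma$ is nondegenerate if and only if there exists an invertible $(|M|-n)\times(|M|-n)$ Child-Selection matrix of $\Gamma$.
   Context: Reaction $j$ is $\sum_m s^j_m\mathsf m\to\sum_m\tilde s^j_m\mathsf m$ with $s^j_m,\tilde s^j_m\ge0$; $\mathbb S_{mj}=\tilde s^j_m-s^j_m$. A reactivity matrix is an $|E|\times|M|$ matrix $R$ with $R_{jm}>0$ if $s^j_m>0$ and $R_{jm}=0$ otherwise; the symbolic Jacobian is $G=\mathbb S R$. $\Gamma$ is nondegenerate if for some reactivity matrix $R$, $\mathbb S R$ has a nonzero $(|M|-n)\times(|M|-n)$ principal minor. A $k$-Child-Selection ($k$-CS) is a triple $\boldsymbol\kappa=(\kappa,E_\kappa,J)$ with $\kappa\subseteq M$, $E_\kappa\subseteq E$, $|\kappa|=|E_\kappa|=k$, and $J:\kappa\to E_\kappa$ a bijection with $s^{J(m)}_m>0$ for all $m\in\kappa$ (each species is a reactant of its assigned reaction). Its CS-matrix is the $k\times k$ matrix $\mathbb S[\boldsymbol\kappa]_{ml}=\mathbb S_{m,J(l)}$, $m,l\in\kappa$. *)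

theory Defs
  imports "HOL-Analysis.Analysis"
begin

text \<open>A reaction network with species type 'm (the set M = UNIV) and reaction
type 'e (the set E = UNIV), both finite. Reactant coefficients: s j m = s^j_m;
product coefficients: st j m = tilde s^j_m.\<close>

definition stoich :: "('e \<Rightarrow> 'm \<Rightarrow> real) \<Rightarrow> ('e \<Rightarrow> 'm \<Rightarrow> real) \<Rightarrow> 'm \<Rightarrow> 'e \<Rightarrow> real" where
  "stoich s st m j = st j m - s j m"

definition det_on :: "'a set \<Rightarrow> ('a \<Rightarrow> 'a \<Rightarrow> real) \<Rightarrow> real" where
  "det_on K A = (\<Sum>p | p permutes K. of_int (sign p) * (\<Prod>i\<in>K. A i (p i)))"

definition invertible_on :: "'a set \<Rightarrow> ('a \<Rightarrow> 'a \<Rightarrow> real) \<Rightarrow> bool" where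
  "invertible_on K A \<longleftrightarrow> (\<exists>B. (\<forall>i\<in>K. \<forall>k\<in>K. (\<Sum>l\<in>K. A i l * B l k) = (if i = k then 1 else 0))
                              \<and> (\<forall>i\<in>K. \<forall>k\<in>K. (\<Sum>l\<in>K. B i l * A l k) = (if i = k then 1 else 0)))"

definition reactivity_matrix :: "('e \<Rightarrow> 'm \<Rightarrow> real) \<Rightarrow> ('e \<Rightarrow> 'm \<Rightarrow> real) \<Rightarrow> bool" where
  "reactivity_matrix s R \<longleftrightarrow> (\<forall>j m. (s j m > 0 \<longrightarrow> R j m > 0) \<and> (\<not> s j m > 0 \<longrightarrow> R j m = 0))"

definition sym_jacobian :: "('e::finite \<Rightarrow> 'm \<Rightarrow> real) \<Rightarrow> ('e \<Rightarrow> 'm \<Rightarrow> real) \<Rightarrow> ('e \<Rightarrow> 'm \<Rightarrow> real) \<Rightarrow> 'm \<Rightarrow> 'm \<Rightarrow> real" where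
  "sym_jacobian s st R m m' = (\<Sum>j\<in>UNIV. stoich s st m j * R j m')"

definition coker_dim :: "('e::finite \<Rightarrow> 'm::finite \<Rightarrow> real) \<Rightarrow> ('e \<Rightarrow> 'm \<Rightarrow> real) \<Rightarrow> nat" where
  "coker_dim s st = dim {x :: real ^ 'm. \<forall>j. (\<Sum>m\<in>UNIV. stoich s st m j * x $ m) = 0}"

definition nondegenerate :: "('e::finite \<Rightarrow> 'm::finite \<Rightarrow> real) \<Rightarrow> ('e \<Rightarrow> 'm \<Rightarrow> real) \<Rightarrow> bool" where
  "nondegenerate s st \<longleftrightarrow> (\<exists>R. reactivity_matrix s R \<and>
     (\<exists>K. card K = CARD('m) - coker_dim s st \<and> det_on K (sym_jacobian s st R) \<noteq> 0))"

definition child_selection :: "('e \<Rightarrow> 'm \<Rightarrow> real) \<Rightarrow> nat \<Rightarrow> 'm set \<Rightarrow> 'e set \<Rightarrow> ('m \<Rightarrow> 'e) \<Rightarrow> bool" where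
  "child_selection s k \<kappa> E\<kappa> J \<longleftrightarrow> card \<kappa> = k \<and> card E\<kappa> = k \<and> bij_betw J \<kappa> E\<kappa>
      \<and> (\<forall>m\<in>\<kappa>. s (J m) m > 0)"

definition cs_matrix :: "('e \<Rightarrow> 'm \<Rightarrow> real) \<Rightarrow> ('e \<Rightarrow> 'm \<Rightarrow> real) \<Rightarrow> ('m \<Rightarrow> 'e) \<Rightarrow> 'm \<Rightarrow> 'm \<Rightarrow> real" where
  "cs_matrix s st J m l = stoich s st m (J l)"

end

theory Submission
  imports Defs
begin

text \<open>Expanding the principal minor of \<open>G = \<bbbS> R\<close> on \<open>\<kappa>\<close> multilinearly in the
columns of \<open>R\<close> gives a sum, over all maps \<open>J : \<kappa> \<rightarrow> E\<close>, of \<open>\<Prod>m\<in>\<kappa>. R (J m) m\<close> times the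
minor of \<open>\<bbbS>\<close> whose columns are the reactions \<open>J m\<close>. If the minor of \<open>G\<close> is nonzero, some
term is nonzero: then every \<open>R (J m) m\<close> is nonzero, so \<open>m\<close> is a reactant of \<open>J m\<close>, and the
selected columns are pairwise distinct, so \<open>J\<close> is injective; this is a Child-Selection with
invertible CS-matrix. Conversely, for a Child-Selection \<open>J\<close> let \<open>R\<^sub>\<epsilon>\<close> have entry \<open>1\<close> at each
\<open>(J m, m)\<close>, \<open>\<epsilon>\<close> at the remaining reactant positions and \<open>0\<close> elsewhere. The minor of
\<open>\<bbbS> R\<^sub>0\<close> on \<open>\<kappa>\<close> is the determinant of the CS-matrix, so by continuity the minor of \<open>\<bbbS> R\<^sub>\<epsilon>\<close> is
nonzero for some \<open>\<epsilon> > 0\<close>, and \<open>R\<^sub>\<epsilon>\<close> is a reactivity matrix.\<close>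

text \<open>Padding a \<open>K \<times> K\<close> block with the identity reduces \<^const>\<open>det_on\<close> and
\<^const>\<open>invertible_on\<close> to the library's \<^const>\<open>det\<close> and \<^const>\<open>invertible\<close>.\<close>

definition id_extension :: "'a::finite set \<Rightarrow> ('a \<Rightarrow> 'a \<Rightarrow> real) \<Rightarrow> real^'a^'a" where
  "id_extension K A = (\<chi> i l. if i \<in> K \<and> l \<in> K then A i l else if i = l then 1 else 0)"

lemma id_extension_mult_left:
  "(\<Sum>l\<in>UNIV. id_extension K A $ i $ l * Y l) = (if i \<in> K then (\<Sum>l\<in>K. A i l * Y l) else Y i)"
proof -
  have "(\<Sum>l\<in>UNIV. id_extension K A $ i $ l * Y l)
      = (\<Sum>l\<in>UNIV. if i \<in> K then (if l \<in> K then A i l * Y l else 0) else if i = l then Y l else 0)"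
    by (rule sum.cong) (auto simp: id_extension_def)
  then show ?thesis by (simp add: sum.If_cases)
qed

lemma id_extension_mult_right:
  "(\<Sum>l\<in>UNIV. Y l * id_extension K A $ l $ k) = (if k \<in> K then (\<Sum>l\<in>K. Y l * A l k) else Y k)"
proof -
  have "(\<Sum>l\<in>UNIV. Y l * id_extension K A $ l $ k)
      = (\<Sum>l\<in>UNIV. if k \<in> K then (if l \<in> K then Y l * A l k else 0) else if l = k then Y l else 0)"
    by (rule sum.cong) (auto simp: id_extension_def)
  then show ?thesis by (simp add: sum.If_cases)
qed

lemma id_extension_mult:
  "id_extension K A ** id_extension K B = id_extension K (\<lambda>i k. \<Sum>l\<in>K. A i l * B l k)"
proof -
  have "(\<Sum>l\<in>UNIV. id_extension K A $ i $ l * id_extension K B $ l $ k)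
      = id_extension K (\<lambda>i k. \<Sum>l\<in>K. A i l * B l k) $ i $ k" for i k
  proof -
    have "(\<Sum>l\<in>K. A i l * id_extension K B $ l $ k) = (if k \<in> K then \<Sum>l\<in>K. A i l * B l k else 0)"
      by (cases "k \<in> K") (auto simp: id_extension_def intro: sum.cong sum.neutral)
    then show ?thesis
      by (simp add: id_extension_mult_left) (simp add: id_extension_def)
  qed
  then show ?thesis by (simp add: vec_eq_iff matrix_matrix_mult_def)
qed

lemma invertible_on_iff_invertible_id_extension:
  "invertible_on K A \<longleftrightarrow> invertible (id_extension K A)"
proof
  assume "invertible_on K A"
  then obtain B where "\<forall>i\<in>K. \<forall>k\<in>K. (\<Sum>l\<in>K. A i l * B l k) = (if i = k then 1 else 0)"
    and "\<forall>i\<in>K. \<forall>k\<in>K. (\<Sum>l\<in>K. B i l * A l k) = (if i = k then 1 else 0)"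
    unfolding invertible_on_def by blast
  then have "id_extension K A ** id_extension K B = mat 1"
    and "id_extension K B ** id_extension K A = mat 1"
    unfolding id_extension_mult by (simp_all add: id_extension_def vec_eq_iff mat_def)
  then show "invertible (id_extension K A)" unfolding invertible_def by blast
next
  assume "invertible (id_extension K A)"
  then obtain B where AB: "id_extension K A ** B = mat 1" and BA: "B ** id_extension K A = mat 1"
    unfolding invertible_def by blast
  have "(\<Sum>l\<in>K. A i l * B $ l $ k) = (if i = k then 1 else 0)" if "i \<in> K" for i k
    using arg_cong[OF AB, of "\<lambda>C. C $ i $ k"] that
    by (simp add: matrix_matrix_mult_def mat_def id_extension_mult_left)
  moreover have "(\<Sum>l\<in>K. B $ i $ l * A l k) = (if i = k then 1 else 0)" if "k \<in> K" for i k
    using arg_cong[OF BA, of "\<lambda>C. C $ i $ k"] that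
    by (simp add: matrix_matrix_mult_def mat_def id_extension_mult_right)
  ultimately show "invertible_on K A"
    unfolding invertible_on_def by (intro exI[of _ "\<lambda>i k. B $ i $ k"]) blast
qed

lemma det_id_extension: "det (id_extension K A) = det_on K A"
proof -
  have "det_on K A = (\<Sum>p | p permutes K. of_int (sign p) * (\<Prod>i\<in>UNIV. id_extension K A $ i $ p i))"
    unfolding det_on_def
  proof (intro sum.cong refl arg_cong2[where f = "(*)"])
    fix p assume "p \<in> {p. p permutes K}"
    then have p: "p permutes K" by simp
    show "(\<Prod>i\<in>K. A i (p i)) = (\<Prod>i\<in>UNIV. id_extension K A $ i $ p i)"
      by (rule prod.mono_neutral_cong_left)
        (use p in \<open>auto simp: id_extension_def permutes_not_in permutes_in_image\<close>)
  qed
  also have "\<dots> = det (id_extension K A)"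
    unfolding det_def
  proof (rule sum.mono_neutral_left)
    show "{p. p permutes K} \<subseteq> {p. p permutes UNIV}" by (auto intro: permutes_subset)
    show "\<forall>p\<in>{p. p permutes UNIV} - {p. p permutes K}.
        of_int (sign p) * (\<Prod>i\<in>UNIV. id_extension K A $ i $ p i) = 0"
    proof
      fix p assume "p \<in> {p. p permutes UNIV} - {p. p permutes K}"
      then obtain i where "i \<notin> K" "p i \<noteq> i"
        unfolding permutes_def by blast
      then have "id_extension K A $ i $ p i = 0" by (simp add: id_extension_def)
      then show "of_int (sign p) * (\<Prod>i\<in>UNIV. id_extension K A $ i $ p i) = 0"
        by (auto simp: prod_zero_iff)
    qed
  qed (simp add: finite_permutations)
  finally show ?thesis by simp
qed

lemma invertible_on_iff_det_on_nonzero: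
  fixes K :: "'a::finite set"
  shows "invertible_on K A \<longleftrightarrow> det_on K A \<noteq> 0"
  by (simp add: invertible_on_iff_invertible_id_extension invertible_det_nz det_id_extension)

lemma det_on_identical_columns:
  fixes K :: "'a::finite set"
  assumes "l \<in> K" "l' \<in> K" "l \<noteq> l'" and "\<And>i. A i l = A i l'"
  shows "det_on K A = 0"
proof -
  have "column l (id_extension K A) = column l' (id_extension K A)"
    using assms by (auto simp: column_def id_extension_def vec_eq_iff)
  then show ?thesis
    using det_identical_columns \<open>l \<noteq> l'\<close> by (metis det_id_extension)
qed

lemma det_on_cong:
  assumes "\<And>i l. i \<in> K \<Longrightarrow> l \<in> K \<Longrightarrow> A i l = B i l"
  shows "det_on K A = det_on K B"
  unfolding det_on_def using assms
  by (intro sum.cong refl arg_cong2[where f = "(*)"] prod.cong) (auto simp: permutes_in_image)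

lemma prod_sum_mult_permutes:
  fixes S :: "'a \<Rightarrow> 'b \<Rightarrow> 'c::comm_semiring_1" and R :: "'b \<Rightarrow> 'a \<Rightarrow> 'c"
  assumes "finite K" "finite L" and p: "p permutes K"
  shows "(\<Prod>i\<in>K. \<Sum>j\<in>L. S i j * R j (p i))
       = (\<Sum>J\<in>K \<rightarrow>\<^sub>E L. (\<Prod>l\<in>K. R (J l) l) * (\<Prod>i\<in>K. S i (J (p i))))"
proof -
  have inv_p: "inv p permutes K" and p_inv: "\<And>l. p (inv p l) = l" and inv_p_p: "\<And>i. inv p (p i) = i"
    using p by (simp_all add: permutes_inv permutes_inverses)
  have "(\<Prod>i\<in>K. \<Sum>j\<in>L. S i j * R j (p i)) = (\<Prod>l\<in>K. \<Sum>j\<in>L. S (inv p l) j * R j l)"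
    by (subst prod.permute[OF inv_p]) (simp add: comp_def p_inv)
  also have "\<dots> = (\<Sum>J\<in>K \<rightarrow>\<^sub>E L. \<Prod>l\<in>K. S (inv p l) (J l) * R (J l) l)"
    using assms by (simp add: prod_sum_PiE)
  also have "\<dots> = (\<Sum>J\<in>K \<rightarrow>\<^sub>E L. (\<Prod>l\<in>K. R (J l) l) * (\<Prod>l\<in>K. S (inv p l) (J l)))"
    by (simp add: prod.distrib mult.commute)
  also have "\<dots> = (\<Sum>J\<in>K \<rightarrow>\<^sub>E L. (\<Prod>l\<in>K. R (J l) l) * (\<Prod>i\<in>K. S i (J (p i))))"
    by (subst (2) prod.permute[OF p]) (simp add: comp_def inv_p_p)
  finally show ?thesis .
qed

lemma det_on_mult_expansion:
  fixes S :: "'a \<Rightarrow> 'b \<Rightarrow> real" and R :: "'b \<Rightarrow> 'a \<Rightarrow> real"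
  assumes "finite K" "finite L"
  shows "det_on K (\<lambda>i l. \<Sum>j\<in>L. S i j * R j l)
       = (\<Sum>J\<in>K \<rightarrow>\<^sub>E L. (\<Prod>l\<in>K. R (J l) l) * det_on K (\<lambda>i l. S i (J l)))"
proof -
  have "det_on K (\<lambda>i l. \<Sum>j\<in>L. S i j * R j l)
      = (\<Sum>p | p permutes K. \<Sum>J\<in>K \<rightarrow>\<^sub>E L.
           (\<Prod>l\<in>K. R (J l) l) * (of_int (sign p) * (\<Prod>i\<in>K. S i (J (p i)))))"
    unfolding det_on_def using assms
    by (intro sum.cong refl) (simp add: prod_sum_mult_permutes sum_distrib_left mult.left_commute)
  also have "\<dots> = (\<Sum>J\<in>K \<rightarrow>\<^sub>E L. \<Sum>p | p permutes K.
           (\<Prod>l\<in>K. R (J l) l) * (of_int (sign p) * (\<Prod>i\<in>K. S i (J (p i)))))"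
    by (rule sum.swap)
  also have "\<dots> = (\<Sum>J\<in>K \<rightarrow>\<^sub>E L. (\<Prod>l\<in>K. R (J l) l) * det_on K (\<lambda>i l. S i (J l)))"
    unfolding det_on_def by (simp add: sum_distrib_left)
  finally show ?thesis .
qed

lemma isCont_ex_pos_nonzero:
  fixes f :: "real \<Rightarrow> 'b::t1_space"
  assumes "isCont f 0" and "f 0 \<noteq> c"
  shows "\<exists>e>0. f e \<noteq> c"
proof -
  obtain d where "d > 0" and "\<forall>y. dist 0 y < d \<longrightarrow> f y \<noteq> c"
    using continuous_at_avoid[OF assms] by blast
  then show ?thesis by (intro exI[of _ "d / 2"]) auto
qed

lemma sym_jacobian_minor_imp_child_selection:
  fixes s st R :: "'e::finite \<Rightarrow> 'm::finite \<Rightarrow> real"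
  assumes R: "reactivity_matrix s R" and minor: "det_on K (sym_jacobian s st R) \<noteq> 0"
  obtains J where "inj_on J K" "\<forall>m\<in>K. s (J m) m > 0" "det_on K (cs_matrix s st J) \<noteq> 0"
proof -
  have "sym_jacobian s st R = (\<lambda>i l. \<Sum>j\<in>UNIV. stoich s st i j * R j l)"
    and "\<And>J. cs_matrix s st J = (\<lambda>i l. stoich s st i (J l))"
    by (simp_all add: fun_eq_iff sym_jacobian_def cs_matrix_def)
  with minor have "(\<Sum>J\<in>K \<rightarrow>\<^sub>E UNIV. (\<Prod>l\<in>K. R (J l) l) * det_on K (cs_matrix s st J)) \<noteq> 0"
    by (simp add: det_on_mult_expansion)
  then obtain J where "(\<Prod>l\<in>K. R (J l) l) * det_on K (cs_matrix s st J) \<noteq> 0"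
    by (meson sum.not_neutral_contains_not_neutral)
  then have R_J: "\<forall>l\<in>K. R (J l) l \<noteq> 0" and det_J: "det_on K (cs_matrix s st J) \<noteq> 0"
    by auto
  have "inj_on J K"
  proof (rule inj_onI, rule ccontr)
    fix l l' assume "l \<in> K" "l' \<in> K" "J l = J l'" "l \<noteq> l'"
    then have "det_on K (cs_matrix s st J) = 0"
      by (intro det_on_identical_columns[of l K l']) (simp_all add: cs_matrix_def)
    with det_J show False by simp
  qed
  moreover have "\<forall>m\<in>K. s (J m) m > 0"
    using R R_J unfolding reactivity_matrix_def by metis
  ultimately show thesis using det_J that by blast
qed

lemma child_selection_imp_sym_jacobian_minor:
  fixes s st :: "'e::finite \<Rightarrow> 'm::finite \<Rightarrow> real"
  assumes reactant: "\<forall>m\<in>K. s (J m) m > 0" and det_J: "det_on K (cs_matrix s st J) \<noteq> 0"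
  shows "\<exists>R. reactivity_matrix s R \<and> det_on K (sym_jacobian s st R) \<noteq> 0"
proof -
  define R :: "real \<Rightarrow> 'e \<Rightarrow> 'm \<Rightarrow> real" where
    "R e j m = (if m \<in> K \<and> j = J m then 1 else if s j m > 0 then e else 0)" for e j m
  define f where "f e = det_on K (sym_jacobian s st (R e))" for e
  have "f 0 = det_on K (cs_matrix s st J)"
    unfolding f_def
  proof (rule det_on_cong)
    fix i l assume "l \<in> K"
    then have "sym_jacobian s st (R 0) i l = (\<Sum>j\<in>UNIV. if j = J l then stoich s st i j else 0)"
      unfolding sym_jacobian_def R_def by (intro sum.cong) auto
    then show "sym_jacobian s st (R 0) i l = cs_matrix s st J i l"
      by (simp add: cs_matrix_def)
  qed
  moreover have "isCont (\<lambda>e. R e j m) 0" for j m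
    unfolding R_def by (cases "m \<in> K"; cases "j = J m"; cases "s j m > 0") simp_all
  then have "isCont f 0"
    unfolding f_def det_on_def sym_jacobian_def by (intro continuous_intros)
  ultimately obtain e where "e > 0" "f e \<noteq> 0"
    using isCont_ex_pos_nonzero det_J by metis
  moreover have "reactivity_matrix s (R e)"
    unfolding reactivity_matrix_def R_def using reactant \<open>e > 0\<close> by auto
  ultimately show ?thesis unfolding f_def by blast
qed

lemma sym_jacobian_minor_iff_child_selection:
  fixes s st :: "'e::finite \<Rightarrow> 'm::finite \<Rightarrow> real"
  shows "(\<exists>R. reactivity_matrix s R \<and> (\<exists>K. card K = k \<and> det_on K (sym_jacobian s st R) \<noteq> 0))
     \<longleftrightarrow> (\<exists>\<kappa> E\<kappa> J. child_selection s k \<kappa> E\<kappa> J \<and> invertible_on \<kappa> (cs_matrix s st J))"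
proof
  assume "\<exists>R. reactivity_matrix s R \<and> (\<exists>K. card K = k \<and> det_on K (sym_jacobian s st R) \<noteq> 0)"
  then obtain R K where R: "reactivity_matrix s R" and "card K = k"
    and minor: "det_on K (sym_jacobian s st R) \<noteq> 0"
    by blast
  moreover obtain J where
    "inj_on J K" "\<forall>m\<in>K. s (J m) m > 0" "det_on K (cs_matrix s st J) \<noteq> 0"
    using sym_jacobian_minor_imp_child_selection[OF R minor] by blast
  ultimately have "child_selection s k K (J ` K) J" and "invertible_on K (cs_matrix s st J)"
    by (simp_all add: child_selection_def card_image inj_on_imp_bij_betw invertible_on_iff_det_on_nonzero)
  then show "\<exists>\<kappa> E\<kappa> J. child_selection s k \<kappa> E\<kappa> J \<and> invertible_on \<kappa> (cs_matrix s st J)"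
    by blast
next
  assume "\<exists>\<kappa> E\<kappa> J. child_selection s k \<kappa> E\<kappa> J \<and> invertible_on \<kappa> (cs_matrix s st J)"
  then obtain K EK J where "child_selection s k K EK J" "invertible_on K (cs_matrix s st J)"
    by blast
  then show "\<exists>R. reactivity_matrix s R \<and> (\<exists>K. card K = k \<and> det_on K (sym_jacobian s st R) \<noteq> 0)"
    using child_selection_imp_sym_jacobian_minor[of K s J st]
    by (auto simp: child_selection_def invertible_on_iff_det_on_nonzero)
qed

theorem mainTheorem9:
  fixes s st :: "'e::finite \<Rightarrow> 'm::finite \<Rightarrow> real"
  assumes "\<forall>j m. s j m \<ge> 0" and "\<forall>j m. st j m \<ge> 0"
  shows "nondegenerate s st \<longleftrightarrow>
    (\<exists>\<kappa> E\<kappa> J. child_selection s (CARD('m) - coker_dim s st) \<kappa> E\<kappa> J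
        \<and> invertible_on \<kappa> (cs_matrix s st J))"
  unfolding nondegenerate_def by (rule sym_jacobian_minor_iff_child_selection)

end
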